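(* Consider the feasible set $F$ of the distributionally robust chance-constrained bin packing problem: all $(z,y)$ with $z\in\{0,1\}^I$, $y=(y_{ij})\in\{0,1\}^{I\times J}$ satisfying $y_{ij}\le\rho_{ij}z_i$ for all $i\in[I],j\in[J]$, $\sum_{i=1}^I y_{ij}=1$ for all $j\in[J]$, and, for each $i\in[I]$, the chance constraint $\inf_{\mathbb{P}\in\mathcal{D}}\mathbb{P}\{\sum_{j=1}^J\tilde t_{ij}y_{ij}\le T_i\}\ge1-\alpha_i$. Fix $i\in[I]$ and write $y_i=(y_{i1},\dots,y_{iJ})$. (a) Let $h:\{0,1\}^J\to\mathbb{R}$ be submodular with $h(0)=0$ such that every $(z,y)\in F$ satisfies $h(y_i)\le T_i$ (so that $\pi^{\top}y_i\le T_i$ is an extended polymatroid inequality for bin $i$ whenever $\pi\in\mathrm{EP}_h$). Then for every $\pi\in\mathrm{EP}_h$, the inequality $\pi^{\top}y_i\le T_i z_i$ is valid for $F$. (b) Let $v_i\in\{0,1\}^{J+J^2}$ be the lifted vector $v_i=(y_{i1},\dots,y_{iJ},w_{i11},\dots,w_{i1J},w_{i21},\dots,w_{iJJ})$ with $w_{ijk}=y_{ij}y_{ik}$, and let $h:\{0,1\}^{J+J^2}\to\mathbb{R}$ be submodular with $h(0)=0$ such that every $(z,y)\in F$ satisfies $h(v_i)\le T_i^2$. Then for every $\pi\in\mathrm{EP}_h$, the inequality $\pi^{\top}v_i\le T_i^2 z_i$ is valid for $F$.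
   Context: $[I]=\{1,\dots,I\}$ indexes bins with capacities $T_i\in\mathbb{R}$ and risk levels $\alpha_i\in(0,1)$; $[J]=\{1,\dots,J\}$ indexes items; $\rho_{ij}\in\{0,1\}$ indicates whether item $j$ may be assigned to bin $i$; $z_i=1$ iff bin $i$ is open; $y_{ij}=1$ iff item $j$ is assigned to bin $i$; $\tilde t_{ij}$ are random item weights whose joint distribution $\mathbb{P}$ ranges over an ambiguity set $\mathcal{D}$. Binary vectors are identified with subsets. A set function $h$ on subsets of a ground set $N$ is submodular if $h(R\cup\{j\})-h(R)\ge h(S\cup\{j\})-h(S)$ for all $R\subseteq S\subseteq N$, $j\in N\setminus S$. For such $h$, the extended polymatroid is $\mathrm{EP}_h=\{\pi\in\mathbb{R}^{N}:\ \sum_{j\in R}\pi_j\le h(R)\ \forall R\subseteq N\}$. An inequality is valid for $F$ if every point of $F$ satisfies it. *)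

theory Defs
  imports "HOL-Probability.Probability"
begin

definition submodular :: "('a set \<Rightarrow> real) \<Rightarrow> bool" where
  "submodular h \<longleftrightarrow>
     (\<forall>R S j. R \<subseteq> S \<longrightarrow> j \<notin> S \<longrightarrow> h (insert j R) - h R \<ge> h (insert j S) - h S)"

definition EP :: "('a::finite set \<Rightarrow> real) \<Rightarrow> ('a \<Rightarrow> real) set" where
  "EP h = {\<pi>. \<forall>R. (\<Sum>j\<in>R. \<pi> j) \<le> h R}"

text \<open>Bins are indexed by the finite type 'i, items by the finite type 'j.
  z and y are 0/1 real vectors. The random weights are t \<omega> i j on a sample
  space 'w; D is the ambiguity set of distributions (measures on 'w).
  The constraint inf_{P in D} P{...} \<ge> 1 - alpha_i is written out as
  "for all P in D".\<close>
definition feasible ::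
  "('i::finite \<Rightarrow> real) \<Rightarrow> ('i \<Rightarrow> real) \<Rightarrow> ('i \<Rightarrow> 'j::finite \<Rightarrow> real)
   \<Rightarrow> 'w measure set \<Rightarrow> ('w \<Rightarrow> 'i \<Rightarrow> 'j \<Rightarrow> real)
   \<Rightarrow> (('i \<Rightarrow> real) \<times> ('i \<Rightarrow> 'j \<Rightarrow> real)) set" where
  "feasible T \<alpha> \<rho> D t =
     {(z, y). (\<forall>i. z i \<in> {0, 1}) \<and> (\<forall>i j. y i j \<in> {0, 1})
        \<and> (\<forall>i j. y i j \<le> \<rho> i j * z i)
        \<and> (\<forall>j. (\<Sum>i\<in>UNIV. y i j) = 1)
        \<and> (\<forall>i. \<forall>P\<in>D.
              measure P {\<omega> \<in> space P. (\<Sum>j\<in>UNIV. t \<omega> i j * y i j) \<le> T i} \<ge> 1 - \<alpha> i)}"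

definition supp01 :: "('a \<Rightarrow> real) \<Rightarrow> 'a set" where
  "supp01 x = {j. x j = 1}"

definition lifted :: "('i \<Rightarrow> 'j \<Rightarrow> real) \<Rightarrow> 'i \<Rightarrow> ('j + 'j \<times> 'j) \<Rightarrow> real" where
  "lifted y i e = (case e of Inl j \<Rightarrow> y i j | Inr (j, k) \<Rightarrow> y i j * y i k)"

end

theory Submission
  imports Defs
begin

text \<open>The same argument covers both
  parts once it is stated for an arbitrary 0/1 vector x that vanishes when z_i = 0.\<close>

lemma sum_mult_01_eq_sum_supp01:
  fixes x :: "'a::finite \<Rightarrow> real"
  assumes "\<forall>e. x e \<in> {0, 1}"
  shows "(\<Sum>e\<in>UNIV. \<pi> e * x e) = (\<Sum>e\<in>supp01 x. \<pi> e)"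
proof -
  have "(\<Sum>e\<in>UNIV. \<pi> e * x e) = (\<Sum>e\<in>UNIV. if x e = 1 then \<pi> e else 0)"
    by (rule sum.cong) (use assms in auto)
  also have "\<dots> = (\<Sum>e\<in>supp01 x. \<pi> e)"
    by (simp add: sum.If_cases supp01_def)
  finally show ?thesis .
qed

lemma EP_sum_le: "\<pi> \<in> EP h \<Longrightarrow> (\<Sum>e\<in>R. \<pi> e) \<le> h R"
  by (simp add: EP_def)

lemma EP_inequality_mult_bin_indicator:
  fixes x :: "'a::finite \<Rightarrow> real"
  assumes x01: "\<forall>e. x e \<in> {0, 1}" and z01: "z \<in> {0, 1}"
    and closed: "z = 0 \<Longrightarrow> \<forall>e. x e = 0"
    and \<pi>: "\<pi> \<in> EP h" and h_le: "h (supp01 x) \<le> c"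
  shows "(\<Sum>e\<in>UNIV. \<pi> e * x e) \<le> c * z"
proof (cases "z = 0")
  case True
  then show ?thesis using closed by simp
next
  case False
  with z01 have "z = 1" by simp
  have "(\<Sum>e\<in>UNIV. \<pi> e * x e) = (\<Sum>e\<in>supp01 x. \<pi> e)"
    using x01 by (rule sum_mult_01_eq_sum_supp01)
  also have "\<dots> \<le> h (supp01 x)"
    using \<pi> by (rule EP_sum_le)
  finally show ?thesis
    using h_le \<open>z = 1\<close> by simp
qed

lemma feasible_binary:
  assumes "(z, y) \<in> feasible T \<alpha> \<rho> D t"
  shows "\<forall>j. y i j \<in> {0, 1}" and "z i \<in> {0, 1}"
  using assms unfolding feasible_def by blast+

lemma feasible_closed_bin_empty:
  assumes f: "(z, y) \<in> feasible T \<alpha> \<rho> D t" and "z i = 0"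
  shows "y i j = 0"
proof -
  have "y i j \<le> \<rho> i j * z i"
    using f unfolding feasible_def by blast
  with \<open>z i = 0\<close> have "y i j \<le> 0" by simp
  moreover have "y i j \<in> {0, 1}"
    using feasible_binary(1)[OF f] by blast
  ultimately show ?thesis by auto
qed

lemma lifted_binary:
  assumes "\<forall>j. y i j \<in> {0, 1::real}"
  shows "\<forall>e. lifted y i e \<in> {0, 1}"
proof -
  have "a * b \<in> {0, 1}" if "a \<in> {0, 1}" "b \<in> {0, 1}" for a b :: real
    using that by auto
  with assms show ?thesis
    by (auto simp: lifted_def split: sum.split)
qed

lemma lifted_zero:
  assumes "\<forall>j. y i j = 0"
  shows "\<forall>e. lifted y i e = 0"
  using assms by (auto simp: lifted_def split: sum.split)

theorem proposition4:
  fixes T \<alpha> :: "'i::finite \<Rightarrow> real" and \<rho> :: "'i \<Rightarrow> 'j::finite \<Rightarrow> real"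
    and D :: "'w measure set" and t :: "'w \<Rightarrow> 'i \<Rightarrow> 'j \<Rightarrow> real" and i :: 'i
  assumes "\<forall>b. 0 < \<alpha> b \<and> \<alpha> b < 1"
    and "\<forall>b j. \<rho> b j \<in> {0, 1}"
    and "\<forall>P\<in>D. prob_space P"
    and "\<forall>P\<in>D. \<forall>b j. (\<lambda>\<omega>. t \<omega> b j) \<in> borel_measurable P"
  shows
    "(\<forall>h :: 'j set \<Rightarrow> real.
        submodular h \<and> h {} = 0
        \<and> (\<forall>(z, y) \<in> feasible T \<alpha> \<rho> D t. h (supp01 (y i)) \<le> T i)
        \<longrightarrow> (\<forall>\<pi> \<in> EP h. \<forall>(z, y) \<in> feasible T \<alpha> \<rho> D t.
               (\<Sum>j\<in>UNIV. \<pi> j * y i j) \<le> T i * z i))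
     \<and>
     (\<forall>h :: ('j + 'j \<times> 'j) set \<Rightarrow> real.
        submodular h \<and> h {} = 0
        \<and> (\<forall>(z, y) \<in> feasible T \<alpha> \<rho> D t. h (supp01 (lifted y i)) \<le> (T i)\<^sup>2)
        \<longrightarrow> (\<forall>\<pi> \<in> EP h. \<forall>(z, y) \<in> feasible T \<alpha> \<rho> D t.
               (\<Sum>e\<in>UNIV. \<pi> e * lifted y i e) \<le> (T i)\<^sup>2 * z i))"
proof (intro conjI allI impI ballI; clarify)
  fix h :: "'j set \<Rightarrow> real" and \<pi> z y
  assume "\<forall>(z, y) \<in> feasible T \<alpha> \<rho> D t. h (supp01 (y i)) \<le> T i"
    and "\<pi> \<in> EP h" and f: "(z, y) \<in> feasible T \<alpha> \<rho> D t"
  then show "(\<Sum>j\<in>UNIV. \<pi> j * y i j) \<le> T i * z i"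
    by (intro EP_inequality_mult_bin_indicator feasible_binary[OF f])
      (auto intro: feasible_closed_bin_empty[OF f])
next
  fix h :: "('j + 'j \<times> 'j) set \<Rightarrow> real" and \<pi> z y
  assume "\<forall>(z, y) \<in> feasible T \<alpha> \<rho> D t. h (supp01 (lifted y i)) \<le> (T i)\<^sup>2"
    and "\<pi> \<in> EP h" and f: "(z, y) \<in> feasible T \<alpha> \<rho> D t"
  then show "(\<Sum>e\<in>UNIV. \<pi> e * lifted y i e) \<le> (T i)\<^sup>2 * z i"
    by (intro EP_inequality_mult_bin_indicator lifted_binary feasible_binary[OF f] lifted_zero)
      (auto intro: feasible_closed_bin_empty[OF f])
qed

end
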